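(* Let $\mathbb{G}$ be a topological map embedded in a closed orientable surface of genus $g\ge0$ and let $\ell$ be a tame loop of $\mathbb{G}$. Let $\mathfrak{m}_\ell$ be the real vector space spanned by the Makeenko--Migdal vectors $\mu_v$, $v\in V_\ell$, and the 2-forms $d\omega_e$, $e\notin E_\ell$. Then $$\mathfrak{m}_\ell=\begin{cases}\{\alpha\in\Omega^2(\mathbb{G},\mathbb{R}):\langle\alpha,\mu_*\rangle=0\} & \text{if }[\ell]_\mathbb{R}\neq0,\\ \{\alpha\in\Omega^2(\mathbb{G},\mathbb{R}):\langle\alpha,\mu_*\rangle=\langle\alpha,n_\ell\rangle=0\} & \text{if }[\ell]_\mathbb{R}=0.\end{cases}$$
   Context: A map $\mathbb{G}=(V,E,F)$ is a graph embedded in the surface with all faces homeomorphic to discs; every edge $e$ comes with its reverse $e^{-1}$, and $E_+$ (resp. $F_+$) is a choice of one orientation per edge (resp. the positively oriented faces). $\Omega^0,\Omega^1,\Omega^2$ are the real-valued functions on $V$, on $E$ with $\omega(e^{-1})=-\omega(e)$, and on $F$ with $\mu(f^{-1})=-\mu(f)$; they carry the inner products making $(f_v)_{v\in V}$, $(\omega_e)_{e\in E_+}$, $(\mu_f)_{f\in F_+}$ orthonormal, where $f_v,\omega_e,\mu_f$ are the indicator forms ($\omega_{e^{-1}}=-\omega_e$). $d\omega(f)=\sum_{e\in\partial f}\omega(e)$ (sum over the edges of the boundary loop of $f$), $df(e)=f(\overline e)-f(\underline e)$, and $d^*$ is the adjoint of $d$. $\mu_*$ is the 2-form equal to $1$ on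 every $f\in F_+$. For a path $\ell=e_1\cdots e_n$, $\omega_\ell=\sum_i\omega_{e_i}$. The homology class $[\ell]_\mathbb{R}$ is the class of $\omega_\ell$ in $\ker(d^*:\Omega^1\to\Omega^0)/d^*(\Omega^2)$. If $[\ell]_\mathbb{R}=0$, the winding function $n_\ell\in\Omega^2$ is the unique 2-form with $d^*n_\ell=\omega_\ell$ and $\langle n_\ell,\mu_*\rangle=0$. A tame loop uses each unoriented edge at most once and each vertex at most twice, and at each vertex $v$ visited twice, labelling the four outgoing edges at $v$ used by $\ell$ (up to orientation) as $e_1,e_2,e_3,e_4$ in counterclockwise cyclic order, $\ell$ is cyclically equivalent to a loop of the form $\alpha e_1^{-1}e_3\beta e_2^{-1}e_4\gamma$; $V_\ell$ is the set of such vertices, and the Makeenko--Migdal vector at $v$ is $\mu_v=d\omega_{e_1}+d\omega_{e_3}=-d\omega_{e_2}-d\omega_{e_4}$. $E_\ell$ is the set of edges $e$ such that $\ell$ runs through $e$ or $e^{-1}$. *)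

theory Defs
  imports Complex_Main
begin

text \<open>
Combinatorial encoding of a map on a closed orientable surface (rotation system).
  D   : finite set of darts = oriented edges E;
  rv  : the reversal e \<mapsto> e^{-1} (fixed-point-free involution of D);
  sg  : the rotation: sg e is the next outgoing dart counterclockwise around the
        source vertex of e.
Vertices are the sg-orbits (the orbit of e is the source vertex of e), positively
oriented faces are the orbits of the face permutation (equivalently of rv o sg,
whose inverse sg^{-1} o rv follows the boundary of the face on the left of a dart).
Every connected rotation system defines a map on a closed orientable surface, of
genus g given by Euler's formula, and conversely.\<close>

definition vert :: "('d \<Rightarrow> 'd) \<Rightarrow> 'd \<Rightarrow> 'd set" where
  "vert sg e = {(sg ^^ k) e | k. True}"

definition faces :: "'d set \<Rightarrow> ('d \<Rightarrow> 'd) \<Rightarrow> ('d \<Rightarrow> 'd) \<Rightarrow> 'd set set" where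
  "faces D rv sg = (\<lambda>e. {((rv \<circ> sg) ^^ k) e | k. True}) ` D"

definition comb_map :: "'d set \<Rightarrow> ('d \<Rightarrow> 'd) \<Rightarrow> ('d \<Rightarrow> 'd) \<Rightarrow> bool" where
  "comb_map D rv sg \<longleftrightarrow>
     finite D \<and> D \<noteq> {} \<and>
     (\<forall>e\<in>D. rv e \<in> D \<and> rv (rv e) = e \<and> rv e \<noteq> e) \<and>
     bij_betw sg D D \<and>
     (\<forall>x\<in>D. \<forall>y\<in>D. (x, y) \<in> ({(e, sg e) | e. e \<in> D} \<union> {(e, rv e) | e. e \<in> D})\<^sup>*)"

definition Omega1 :: "'d set \<Rightarrow> ('d \<Rightarrow> 'd) \<Rightarrow> ('d \<Rightarrow> real) set" where
  "Omega1 D rv = {w. (\<forall>e\<in>D. w (rv e) = - w e) \<and> (\<forall>e. e \<notin> D \<longrightarrow> w e = 0)}"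

definition Omega2 :: "'d set \<Rightarrow> ('d \<Rightarrow> 'd) \<Rightarrow> ('d \<Rightarrow> 'd) \<Rightarrow> ('d set \<Rightarrow> real) set" where
  "Omega2 D rv sg = {a. \<forall>f. f \<notin> faces D rv sg \<longrightarrow> a f = 0}"

text \<open>Inner product on 1-forms making (omega_e), e in E_+, orthonormal:
  sum over one orientation of each edge = half the sum over all darts.\<close>
definition inner1 :: "'d set \<Rightarrow> ('d \<Rightarrow> real) \<Rightarrow> ('d \<Rightarrow> real) \<Rightarrow> real" where
  "inner1 D w w' = (\<Sum>e\<in>D. w e * w' e) / 2"

definition inner2 :: "'d set \<Rightarrow> ('d \<Rightarrow> 'd) \<Rightarrow> ('d \<Rightarrow> 'd) \<Rightarrow> ('d set \<Rightarrow> real) \<Rightarrow> ('d set \<Rightarrow> real) \<Rightarrow> real" where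
  "inner2 D rv sg a b = (\<Sum>f\<in>faces D rv sg. a f * b f)"

definition dform1 :: "'d set \<Rightarrow> ('d \<Rightarrow> 'd) \<Rightarrow> ('d \<Rightarrow> 'd) \<Rightarrow> ('d \<Rightarrow> real) \<Rightarrow> 'd set \<Rightarrow> real" where
  "dform1 D rv sg w = (\<lambda>f. if f \<in> faces D rv sg then (\<Sum>e\<in>f. w e) else 0)"

definition codiff2 :: "'d set \<Rightarrow> ('d \<Rightarrow> 'd) \<Rightarrow> ('d \<Rightarrow> 'd) \<Rightarrow> ('d set \<Rightarrow> real) \<Rightarrow> 'd \<Rightarrow> real" where
  "codiff2 D rv sg a = (THE w'. w' \<in> Omega1 D rv \<and>
      (\<forall>w\<in>Omega1 D rv. inner2 D rv sg (dform1 D rv sg w) a = inner1 D w w'))"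

definition ind1 :: "('d \<Rightarrow> 'd) \<Rightarrow> 'd \<Rightarrow> 'd \<Rightarrow> real" where
  "ind1 rv e = (\<lambda>x. if x = e then 1 else if x = rv e then -1 else 0)"

definition mu_star :: "'d set \<Rightarrow> ('d \<Rightarrow> 'd) \<Rightarrow> ('d \<Rightarrow> 'd) \<Rightarrow> 'd set \<Rightarrow> real" where
  "mu_star D rv sg = (\<lambda>f. if f \<in> faces D rv sg then 1 else 0)"

definition is_loop :: "'d set \<Rightarrow> ('d \<Rightarrow> 'd) \<Rightarrow> ('d \<Rightarrow> 'd) \<Rightarrow> 'd list \<Rightarrow> bool" where
  "is_loop D rv sg l \<longleftrightarrow> l \<noteq> [] \<and> set l \<subseteq> D \<and>
     (\<forall>i < length l. vert sg (rv (l ! i)) = vert sg (l ! ((i + 1) mod length l)))"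

definition omega_path :: "('d \<Rightarrow> 'd) \<Rightarrow> 'd list \<Rightarrow> 'd \<Rightarrow> real" where
  "omega_path rv l = (\<lambda>x. \<Sum>i<length l. ind1 rv (l ! i) x)"

definition visits :: "('d \<Rightarrow> 'd) \<Rightarrow> 'd list \<Rightarrow> 'd set \<Rightarrow> nat" where
  "visits sg l v = card {i. i < length l \<and> vert sg (l ! i) = v}"

definition ccw4 :: "('d \<Rightarrow> 'd) \<Rightarrow> 'd \<Rightarrow> 'd \<Rightarrow> 'd \<Rightarrow> 'd \<Rightarrow> bool" where
  "ccw4 sg a b c d \<longleftrightarrow> (\<exists>i j k. 0 < i \<and> i < j \<and> j < k \<and> k < card (vert sg a) \<and>
       (sg ^^ i) a = b \<and> (sg ^^ j) a = c \<and> (sg ^^ k) a = d)"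

text \<open>e1,e2,e3,e4 are outgoing darts at v in counterclockwise cyclic order and l is
cyclically equivalent to alpha e1^{-1} e3 beta e2^{-1} e4 gamma.\<close>
definition crossing_labels :: "('d \<Rightarrow> 'd) \<Rightarrow> ('d \<Rightarrow> 'd) \<Rightarrow> 'd list \<Rightarrow> 'd set \<Rightarrow>
     'd \<Rightarrow> 'd \<Rightarrow> 'd \<Rightarrow> 'd \<Rightarrow> bool" where
  "crossing_labels rv sg l v e1 e2 e3 e4 \<longleftrightarrow>
     vert sg e1 = v \<and> ccw4 sg e1 e2 e3 e4 \<and>
     (\<exists>i < length l. \<exists>j < length l.
        l ! i = rv e1 \<and> l ! ((i + 1) mod length l) = e3 \<and>
        l ! j = rv e2 \<and> l ! ((j + 1) mod length l) = e4)"

definition tame_loop :: "'d set \<Rightarrow> ('d \<Rightarrow> 'd) \<Rightarrow> ('d \<Rightarrow> 'd) \<Rightarrow> 'd list \<Rightarrow> bool" where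
  "tame_loop D rv sg l \<longleftrightarrow> is_loop D rv sg l \<and>
     distinct l \<and> (\<forall>e\<in>set l. rv e \<notin> set l) \<and>
     (\<forall>v. visits sg l v \<le> 2) \<and>
     (\<forall>v. visits sg l v = 2 \<longrightarrow> (\<exists>e1 e2 e3 e4. crossing_labels rv sg l v e1 e2 e3 e4))"

definition Vl :: "('d \<Rightarrow> 'd) \<Rightarrow> 'd list \<Rightarrow> 'd set set" where
  "Vl sg l = {v. visits sg l v = 2}"

definition El :: "('d \<Rightarrow> 'd) \<Rightarrow> 'd list \<Rightarrow> 'd set" where
  "El rv l = {e. e \<in> set l \<or> rv e \<in> set l}"

definition mm_vec :: "'d set \<Rightarrow> ('d \<Rightarrow> 'd) \<Rightarrow> ('d \<Rightarrow> 'd) \<Rightarrow> 'd list \<Rightarrow> 'd set \<Rightarrow> 'd set \<Rightarrow> real" where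
  "mm_vec D rv sg l v = (let (e1, e2, e3, e4) =
       (SOME t. case t of (e1, e2, e3, e4) \<Rightarrow> crossing_labels rv sg l v e1 e2 e3 e4)
     in (\<lambda>f. dform1 D rv sg (ind1 rv e1) f + dform1 D rv sg (ind1 rv e3) f))"

definition lin_span :: "('a \<Rightarrow> real) set \<Rightarrow> ('a \<Rightarrow> real) set" where
  "lin_span G = {a. \<exists>S c. finite S \<and> S \<subseteq> G \<and> a = (\<lambda>x. \<Sum>g\<in>S. c g * g x)}"

definition mm_space :: "'d set \<Rightarrow> ('d \<Rightarrow> 'd) \<Rightarrow> ('d \<Rightarrow> 'd) \<Rightarrow> 'd list \<Rightarrow> ('d set \<Rightarrow> real) set" where
  "mm_space D rv sg l = lin_span (mm_vec D rv sg l ` Vl sg l \<union>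
       (\<lambda>e. dform1 D rv sg (ind1 rv e)) ` (D - El rv l))"

text \<open>[l]_R = 0 : omega_l lies in d^*(Omega^2)\<close>
definition hom_trivial :: "'d set \<Rightarrow> ('d \<Rightarrow> 'd) \<Rightarrow> ('d \<Rightarrow> 'd) \<Rightarrow> 'd list \<Rightarrow> bool" where
  "hom_trivial D rv sg l \<longleftrightarrow> omega_path rv l \<in> codiff2 D rv sg ` Omega2 D rv sg"

definition winding :: "'d set \<Rightarrow> ('d \<Rightarrow> 'd) \<Rightarrow> ('d \<Rightarrow> 'd) \<Rightarrow> 'd list \<Rightarrow> 'd set \<Rightarrow> real" where
  "winding D rv sg l = (THE n. n \<in> Omega2 D rv sg \<and> codiff2 D rv sg n = omega_path rv l \<and>
      inner2 D rv sg n (mu_star D rv sg) = 0)"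

end

theory Submission
  imports Defs
begin

(* Write d* for codiff2: (d* b)(e) is the value of b on the face to the left of e minus its
   value on the face to the left of e^-1, so that d* mu_* = 0 and d* n_l = omega_l.
   The pairing of b with d omega_e is (d* b)(e), and with mu_v it is (d* b)(e1) + (d* b)(e3);
   both vanish when d* b is a multiple of omega_l, which gives one inclusion.
   For the other it suffices that alpha is orthogonal to every r orthogonal to the generators.
   Then d* r vanishes off E_l, and the values of d* r on the darts leaving a vertex sum to 0.
   At a vertex visited once this says that d* r agrees on the darts of l entering and leaving
   it; at a crossing the Makeenko-Migdal relation says so for one of the two passages, hence
   also for the other.  So d* r = c omega_l, with c = 0 if [l] <> 0.  As the map is connected,
   the kernel of d* consists of the constant 2-forms, so r is a constant plus c n_l, and alpha
   is orthogonal to it. *)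

section \<open>Orbits of a bijection of a finite set\<close>

definition orb :: "('a \<Rightarrow> 'a) \<Rightarrow> 'a \<Rightarrow> 'a set" where
  "orb p x = {(p ^^ k) x | k. True}"

lemma vert_eq_orb: "vert p = orb p"
  by (intro ext) (simp add: vert_def orb_def)

lemma funpow_in_orb: "(p ^^ k) x \<in> orb p x"
  unfolding orb_def by blast

lemma self_in_orb: "x \<in> orb p x"
  using funpow_in_orb[where k = 0] by simp

lemma step_in_orb: "p x \<in> orb p x"
  using funpow_in_orb[where k = 1] by simp

lemma funpow_apply_funpow: "(p ^^ m) ((p ^^ k) x) = (p ^^ (m + k)) x"
  by (simp add: funpow_add)

lemma card_orb_le_period:
  assumes "0 < n" "(p ^^ n) x = x"
  shows "card (orb p x) \<le> n"
proof -
  have "orb p x \<subseteq> (\<lambda>k. (p ^^ k) x) ` {..<n}"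
  proof
    fix y assume "y \<in> orb p x"
    then obtain k where "y = (p ^^ k) x"
      unfolding orb_def by blast
    then have "y = (p ^^ (k mod n)) x"
      using funpow_mod_eq[where f = p and n = n] assms(2) by simp
    then show "y \<in> (\<lambda>k. (p ^^ k) x) ` {..<n}"
      using assms(1) by force
  qed
  then have "card (orb p x) \<le> card ((\<lambda>k. (p ^^ k) x) ` {..<n})"
    by (intro card_mono) auto
  also have "\<dots> \<le> n"
    using card_image_le[of "{..<n}"] by simp
  finally show ?thesis .
qed

lemma orb_subset: "bij_betw p A A \<Longrightarrow> x \<in> A \<Longrightarrow> orb p x \<subseteq> A"
  unfolding orb_def using bij_betw_funpow bij_betwE by blast

lemma funpow_period:
  assumes "finite A" "bij_betw p A A" "x \<in> A"
  obtains n where "0 < n" "(p ^^ n) x = x"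
proof -
  have "range (\<lambda>k. (p ^^ k) x) \<subseteq> A"
    using orb_subset[OF assms(2,3)] unfolding orb_def by blast
  then have "finite (range (\<lambda>k. (p ^^ k) x))"
    using assms(1) finite_subset by blast
  then have "\<not> inj (\<lambda>k. (p ^^ k) x)"
    using finite_imageD infinite_UNIV_nat by blast
  then obtain i j where ij: "i < j" "(p ^^ i) x = (p ^^ j) x"
    unfolding inj_def by (metis linorder_neqE_nat)
  then have "(p ^^ i) ((p ^^ (j - i)) x) = (p ^^ i) x"
    by (simp add: funpow_apply_funpow)
  moreover have "inj_on (p ^^ i) A" "(p ^^ (j - i)) x \<in> A"
    using bij_betw_funpow[OF assms(2)] assms(3) bij_betw_imp_inj_on bij_betwE by blast+
  ultimately have "(p ^^ (j - i)) x = x"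
    using assms(3) by (meson inj_onD)
  with ij(1) show thesis
    by (intro that[of "j - i"]) simp_all
qed

lemma orb_eq:
  assumes "finite A" "bij_betw p A A" "x \<in> A" "y \<in> orb p x"
  shows "orb p y = orb p x"
proof -
  have trans: "orb p z \<subseteq> orb p w" if "z \<in> orb p w" for z w
    using that unfolding orb_def by (auto simp: funpow_apply_funpow)
  obtain k where y: "y = (p ^^ k) x"
    using assms(4) unfolding orb_def by blast
  obtain n where n: "0 < n" "(p ^^ n) x = x"
    using funpow_period[OF assms(1-3)] .
  have "(p ^^ (n * k - k)) y = (p ^^ (n * k)) x"
    using n(1) unfolding y funpow_apply_funpow by simp
  also have "\<dots> = x"
    using funpow_mod_eq[where f = p and n = n and m = "n * k"] n(2) by simp
  finally have "x \<in> orb p y"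
    by (metis funpow_in_orb)
  then show ?thesis
    using trans assms(4) by blast
qed

lemma bij_betw_orb:
  assumes "finite A" "bij_betw p A A" "x \<in> A"
  shows "bij_betw p (orb p x) (orb p x)"
proof -
  have sub: "orb p x \<subseteq> A"
    using orb_subset assms(2,3) .
  have "p y \<in> orb p x" if "y \<in> orb p x" for y
    using step_in_orb[of p y] orb_eq[OF assms that] by simp
  then have "p ` orb p x \<subseteq> orb p x"
    by blast
  moreover have "inj_on p (orb p x)"
    using inj_on_subset[OF bij_betw_imp_inj_on[OF assms(2)] sub] .
  moreover have "finite (orb p x)"
    using finite_subset[OF sub assms(1)] .
  ultimately show ?thesis
    using endo_inj_surj by (simp add: bij_betw_def)
qed

lemma sum_over_orbs:
  assumes "finite A" "bij_betw p A A"
  shows "(\<Sum>B\<in>orb p ` A. \<Sum>x\<in>B. g x) = (\<Sum>x\<in>A. g x)"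
proof -
  have "{x \<in> A. orb p x = B} = B" if B: "B \<in> orb p ` A" for B
  proof -
    obtain y where y: "y \<in> A" "B = orb p y"
      using B by blast
    have "x \<in> A \<and> orb p x = B \<longleftrightarrow> x \<in> B" for x
      using self_in_orb[of x p] orb_eq[OF assms y(1), of x] orb_subset[OF assms(2) y(1)] y(2)
      by auto
    then show ?thesis
      by blast
  qed
  then show ?thesis
    using sum.image_gen[OF assms(1), of g "orb p"] by simp
qed

section \<open>Orthogonal projection onto a finite family of functions\<close>

definition inner_on :: "'a set \<Rightarrow> ('a \<Rightarrow> real) \<Rightarrow> ('a \<Rightarrow> real) \<Rightarrow> real" where
  "inner_on X a b = (\<Sum>x\<in>X. a x * b x)"

lemma inner_on_commute: "inner_on X a b = inner_on X b a"
  by (simp add: inner_on_def mult.commute)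

lemma inner_on_add_left: "inner_on X (\<lambda>x. a x + b x) c = inner_on X a c + inner_on X b c"
  by (simp add: inner_on_def distrib_right sum.distrib)

lemma inner_on_diff_scale_left:
  "inner_on X (\<lambda>x. a x - t * b x) c = inner_on X a c - t * inner_on X b c"
  by (simp add: inner_on_def left_diff_distrib sum_subtractf sum_distrib_left mult.assoc)

lemma inner_on_lincomb_left:
  "inner_on X (\<lambda>x. \<Sum>g\<in>G. c g * g x) b = (\<Sum>g\<in>G. c g * inner_on X g b)"
  unfolding inner_on_def sum_distrib_right sum_distrib_left
  by (subst sum.swap) (simp add: mult.assoc)

lemma inner_on_self_eq_0:
  assumes "finite X" "inner_on X a a = 0" "x \<in> X"
  shows "a x = 0"
  using assms sum_nonneg_eq_0_iff[of X "\<lambda>x. a x * a x"] by (simp add: inner_on_def)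

lemma inner_on_remove_component:
  assumes "finite X"
  shows "inner_on X (\<lambda>x. r x - (inner_on X r h / inner_on X h h) * h x) h = 0"
proof (cases "inner_on X h h = 0")
  case True
  then have "inner_on X r h = 0"
    using inner_on_self_eq_0[OF assms True] by (simp add: inner_on_def)
  with True show ?thesis
    by (simp add: inner_on_diff_scale_left)
next
  case False
  then show ?thesis
    unfolding inner_on_diff_scale_left by simp
qed

lemma orthogonal_projection_exists:
  assumes "finite X" "finite G"
  shows "\<exists>c. \<forall>g\<in>G. inner_on X (\<lambda>x. a x - (\<Sum>h\<in>G. c h * h x)) g = 0"
  using assms(2)
proof (induction G arbitrary: a rule: finite_induct)
  case empty
  show ?case by simp
next
  case (insert g0 G)
  obtain ca where ca: "\<forall>g\<in>G. inner_on X (\<lambda>x. a x - (\<Sum>h\<in>G. ca h * h x)) g = 0"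
    using insert.IH by blast
  obtain c0 where c0: "\<forall>g\<in>G. inner_on X (\<lambda>x. g0 x - (\<Sum>h\<in>G. c0 h * h x)) g = 0"
    using insert.IH by blast
  define ra where "ra = (\<lambda>x. a x - (\<Sum>h\<in>G. ca h * h x))"
  define hv where "hv = (\<lambda>x. g0 x - (\<Sum>h\<in>G. c0 h * h x))"
  define t where "t = inner_on X ra hv / inner_on X hv hv"
  define c where "c = (\<lambda>h. if h = g0 then t else ca h - t * c0 h)"
  have residual: "(\<lambda>x. a x - (\<Sum>h\<in>insert g0 G. c h * h x)) = (\<lambda>x. ra x - t * hv x)"
  proof
    fix x
    have "(\<Sum>h\<in>G. c h * h x) = (\<Sum>h\<in>G. ca h * h x - t * (c0 h * h x))"
      using insert.hyps(2) by (intro sum.cong) (auto simp: c_def algebra_simps)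
    also have "\<dots> = (\<Sum>h\<in>G. ca h * h x) - t * (\<Sum>h\<in>G. c0 h * h x)"
      by (simp add: sum_subtractf sum_distrib_left)
    finally show "a x - (\<Sum>h\<in>insert g0 G. c h * h x) = ra x - t * hv x"
      using insert.hyps by (simp add: c_def ra_def hv_def algebra_simps)
  qed
  have perp_G: "inner_on X (\<lambda>x. ra x - t * hv x) g = 0" if "g \<in> G" for g
    using ca c0 that by (simp add: inner_on_diff_scale_left ra_def hv_def)
  have perp_hv: "inner_on X (\<lambda>x. ra x - t * hv x) hv = 0"
    unfolding t_def by (rule inner_on_remove_component[OF assms(1)])
  define res where "res = (\<lambda>x. ra x - t * hv x)"
  have "g0 = (\<lambda>x. hv x + (\<Sum>h\<in>G. c0 h * h x))"
    by (simp add: hv_def)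
  then have "inner_on X g0 res = inner_on X hv res + (\<Sum>h\<in>G. c0 h * inner_on X h res)"
    by (simp add: inner_on_add_left inner_on_lincomb_left)
  also have "\<dots> = 0"
    using perp_hv perp_G by (simp add: res_def inner_on_commute[of X _ "\<lambda>x. ra x - t * hv x"])
  finally have "inner_on X (\<lambda>x. ra x - t * hv x) g0 = 0"
    by (simp add: res_def inner_on_commute)
  then show ?case
    using perp_G residual by (intro exI[of _ c]) simp
qed

lemma in_span_on_if_orthogonal:
  assumes "finite X" "finite G"
    and orth: "\<And>r. (\<And>g. g \<in> G \<Longrightarrow> inner_on X g r = 0) \<Longrightarrow> inner_on X a r = 0"
  shows "\<exists>c. \<forall>x\<in>X. a x = (\<Sum>g\<in>G. c g * g x)"
proof -
  obtain c where c: "\<forall>g\<in>G. inner_on X (\<lambda>x. a x - (\<Sum>h\<in>G. c h * h x)) g = 0"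
    using orthogonal_projection_exists[OF assms(1,2)] by blast
  define r where "r = (\<lambda>x. a x - (\<Sum>h\<in>G. c h * h x))"
  have perp: "inner_on X g r = 0" if "g \<in> G" for g
    using c that by (simp add: r_def inner_on_commute)
  have "inner_on X r r = inner_on X a r - inner_on X (\<lambda>x. \<Sum>h\<in>G. c h * h x) r"
    by (simp add: r_def inner_on_def left_diff_distrib sum_subtractf)
  also have "\<dots> = 0"
    using orth[OF perp] perp by (simp add: inner_on_lincomb_left)
  finally have "r x = 0" if "x \<in> X" for x
    using inner_on_self_eq_0[OF assms(1)] that by blast
  then show ?thesis
    by (auto simp: r_def)
qed

lemma lin_span_finite:
  assumes "finite G"
  shows "a \<in> lin_span G \<longleftrightarrow> (\<exists>c. a = (\<lambda>x. \<Sum>g\<in>G. c g * g x))"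
proof
  assume "a \<in> lin_span G"
  then obtain S c where S: "S \<subseteq> G" "a = (\<lambda>x. \<Sum>g\<in>S. c g * g x)"
    unfolding lin_span_def by blast
  have "(\<Sum>g\<in>S. c g * g x) = (\<Sum>g\<in>G. (if g \<in> S then c g else 0) * g x)" for x
    using S(1) assms by (intro sum.mono_neutral_cong_left) auto
  with S(2) show "\<exists>c. a = (\<lambda>x. \<Sum>g\<in>G. c g * g x)"
    by (intro exI[of _ "\<lambda>g. if g \<in> S then c g else 0"]) auto
next
  assume "\<exists>c. a = (\<lambda>x. \<Sum>g\<in>G. c g * g x)"
  then show "a \<in> lin_span G"
    unfolding lin_span_def using assms by blast
qed

section \<open>The codifferential of a rotation system\<close>

lemma inner2_eq_inner_on: "inner2 D rv sg = inner_on (faces D rv sg)"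
  by (intro ext) (simp add: inner2_def inner_on_def)

lemma inner2_add_left:
  "inner2 D rv sg (\<lambda>f. a f + b f) c = inner2 D rv sg a c + inner2 D rv sg b c"
  by (simp add: inner2_def distrib_right sum.distrib)

lemma self_in_vert: "x \<in> vert sg x"
  unfolding vert_eq_orb by (rule self_in_orb)

lemma ccw4_second:
  assumes "ccw4 sg e1 e2 e3 e4"
  shows "e2 \<in> vert sg e1" "e2 \<noteq> e1"
proof -
  obtain i where i: "0 < i" "i < card (vert sg e1)" "(sg ^^ i) e1 = e2"
    using assms unfolding ccw4_def by auto
  show "e2 \<in> vert sg e1"
    using funpow_in_orb[where p = sg and k = i and x = e1] i(3) by (simp add: vert_eq_orb)
  show "e2 \<noteq> e1"
  proof
    assume "e2 = e1"
    then have "card (vert sg e1) \<le> i"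
      using card_orb_le_period[OF i(1)] i(3) by (simp add: vert_eq_orb)
    with i(2) show False
      by simp
  qed
qed

locale rotation_system =
  fixes D :: "'d set" and rv sg :: "'d \<Rightarrow> 'd"
  assumes comb_map: "comb_map D rv sg"
begin

lemma finite_D: "finite D"
  using comb_map unfolding comb_map_def by blast

lemma D_nonempty: "D \<noteq> {}"
  using comb_map unfolding comb_map_def by blast

lemma rv_in_D: "e \<in> D \<Longrightarrow> rv e \<in> D"
  using comb_map unfolding comb_map_def by blast

lemma rv_rv [simp]: "e \<in> D \<Longrightarrow> rv (rv e) = e"
  using comb_map unfolding comb_map_def by blast

lemma rv_neq: "e \<in> D \<Longrightarrow> rv e \<noteq> e"
  using comb_map unfolding comb_map_def by blast

lemma bij_sg: "bij_betw sg D D"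
  using comb_map unfolding comb_map_def by blast

lemma sg_in_D: "e \<in> D \<Longrightarrow> sg e \<in> D"
  using bij_sg bij_betwE by blast

lemma connected:
  "x \<in> D \<Longrightarrow> y \<in> D \<Longrightarrow> (x, y) \<in> ({(e, sg e) | e. e \<in> D} \<union> {(e, rv e) | e. e \<in> D})\<^sup>*"
  using comb_map unfolding comb_map_def by blast

lemma bij_rv: "bij_betw rv D D"
  by (rule bij_betw_byWitness[where f' = rv]) (auto simp: rv_in_D)

lemma sum_rv: "(\<Sum>e\<in>D. g (rv e)) = (\<Sum>e\<in>D. g e)"
  using sum.reindex_bij_betw[OF bij_rv] .

lemma vert_subset: "x \<in> D \<Longrightarrow> vert sg x \<subseteq> D"
  unfolding vert_eq_orb using orb_subset[OF bij_sg] .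

lemma finite_vert: "x \<in> D \<Longrightarrow> finite (vert sg x)"
  using vert_subset finite_D finite_subset by blast

lemma mem_vert_iff: "w \<in> D \<Longrightarrow> x \<in> D \<Longrightarrow> x \<in> vert sg w \<longleftrightarrow> vert sg x = vert sg w"
  unfolding vert_eq_orb using orb_eq[OF finite_D bij_sg, of w x] self_in_orb[of x sg] by auto

lemma bij_sg_vert: "x \<in> D \<Longrightarrow> bij_betw sg (vert sg x) (vert sg x)"
  unfolding vert_eq_orb using bij_betw_orb[OF finite_D bij_sg] .

abbreviation face :: "'d \<Rightarrow> 'd set" where
  "face \<equiv> orb (rv \<circ> sg)"

lemma bij_face_step: "bij_betw (rv \<circ> sg) D D"
  using bij_betw_trans[OF bij_sg bij_rv] .

lemma faces_eq_image: "faces D rv sg = face ` D"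
  unfolding faces_def by (intro image_cong refl) (simp only: orb_def)

lemma face_in_faces: "e \<in> D \<Longrightarrow> face e \<in> faces D rv sg"
  unfolding faces_eq_image by blast

lemma finite_faces: "finite (faces D rv sg)"
  unfolding faces_eq_image using finite_D by blast

lemma face_eqI: "x \<in> D \<Longrightarrow> y \<in> face x \<Longrightarrow> face y = face x"
  using orb_eq[OF finite_D bij_face_step] .

lemma face_rv_sg: "x \<in> D \<Longrightarrow> face (rv (sg x)) = face x"
  using face_eqI step_in_orb[of "rv \<circ> sg" x] by simp

lemma inner2_dform1: "inner2 D rv sg (dform1 D rv sg w) a = (\<Sum>e\<in>D. w e * a (face e))"
proof -
  have "(\<Sum>e\<in>f. w e) * a f = (\<Sum>e\<in>f. w e * a (face e))" if f: "f \<in> faces D rv sg" for f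
  proof -
    obtain x where "x \<in> D" "f = face x"
      using f unfolding faces_eq_image by blast
    then show ?thesis
      by (simp add: sum_distrib_right face_eqI)
  qed
  then have "inner2 D rv sg (dform1 D rv sg w) a = (\<Sum>f\<in>face ` D. \<Sum>e\<in>f. w e * a (face e))"
    unfolding inner2_def dform1_def faces_eq_image[symmetric] by simp
  also have "\<dots> = (\<Sum>e\<in>D. w e * a (face e))"
    using sum_over_orbs[OF finite_D bij_face_step] .
  finally show ?thesis .
qed

lemma Omega1_eqI:
  assumes "w \<in> Omega1 D rv" "w' \<in> Omega1 D rv"
    and "\<And>u. u \<in> Omega1 D rv \<Longrightarrow> inner1 D u w = inner1 D u w'"
  shows "w = w'"
proof -
  define u where "u = (\<lambda>x. w x - w' x)"
  have "u \<in> Omega1 D rv"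
    using assms(1,2) by (simp add: Omega1_def u_def)
  moreover have "inner1 D u u = inner1 D u w - inner1 D u w'"
    by (simp add: inner1_def u_def right_diff_distrib sum_subtractf diff_divide_distrib)
  ultimately have "(\<Sum>x\<in>D. u x * u x) = 0"
    using assms(3) by (simp add: inner1_def)
  then have "\<forall>x\<in>D. u x = 0"
    using sum_nonneg_eq_0_iff[OF finite_D, of "\<lambda>x. u x * u x"] by simp
  then show ?thesis
    using assms(1,2) by (auto simp: fun_eq_iff Omega1_def u_def)
qed

lemma codiff2_eq:
  "codiff2 D rv sg a = (\<lambda>e. if e \<in> D then a (face e) - a (face (rv e)) else 0)"
  (is "_ = ?c")
proof -
  have c: "?c \<in> Omega1 D rv"
    by (simp add: Omega1_def rv_in_D)
  have adjoint: "inner2 D rv sg (dform1 D rv sg w) a = inner1 D w ?c" if w: "w \<in> Omega1 D rv" for w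
  proof -
    have "(\<Sum>e\<in>D. w e * a (face (rv e))) = (\<Sum>e\<in>D. w (rv e) * a (face e))"
      using sum_rv[of "\<lambda>e. w (rv e) * a (face e)"] by simp
    also have "\<dots> = - (\<Sum>e\<in>D. w e * a (face e))"
      using w by (simp add: Omega1_def sum_negf)
    finally have "(\<Sum>e\<in>D. w e * ?c e) = 2 * (\<Sum>e\<in>D. w e * a (face e))"
      by (simp add: right_diff_distrib sum_subtractf)
    then show ?thesis
      by (simp add: inner2_dform1 inner1_def)
  qed
  show ?thesis
    unfolding codiff2_def
  proof (rule the_equality)
    show "?c \<in> Omega1 D rv \<and>
        (\<forall>w\<in>Omega1 D rv. inner2 D rv sg (dform1 D rv sg w) a = inner1 D w ?c)"
      using c adjoint by blast
  next
    fix w'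
    assume w': "w' \<in> Omega1 D rv \<and>
        (\<forall>w\<in>Omega1 D rv. inner2 D rv sg (dform1 D rv sg w) a = inner1 D w w')"
    show "w' = ?c"
    proof (rule Omega1_eqI)
      show "w' \<in> Omega1 D rv"
        using w' by blast
      show "?c \<in> Omega1 D rv"
        by (rule c)
      fix u
      assume "u \<in> Omega1 D rv"
      then show "inner1 D u w' = inner1 D u ?c"
        using w' adjoint by simp
    qed
  qed
qed

lemma codiff2_apply: "e \<in> D \<Longrightarrow> codiff2 D rv sg a e = a (face e) - a (face (rv e))"
  by (simp add: codiff2_eq)

lemma codiff2_rv: "e \<in> D \<Longrightarrow> codiff2 D rv sg a (rv e) = - codiff2 D rv sg a e"
  by (simp add: codiff2_apply rv_in_D)

lemma codiff2_diff_scale: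
  "e \<in> D \<Longrightarrow> codiff2 D rv sg (\<lambda>f. a f - s * b f) e = codiff2 D rv sg a e - s * codiff2 D rv sg b e"
  by (simp add: codiff2_apply algebra_simps)

lemma codiff2_mu_star: "e \<in> D \<Longrightarrow> codiff2 D rv sg (mu_star D rv sg) e = 0"
  by (simp add: codiff2_apply mu_star_def face_in_faces rv_in_D)

lemma inner2_dform1_ind1:
  assumes "e \<in> D"
  shows "inner2 D rv sg (dform1 D rv sg (ind1 rv e)) a = codiff2 D rv sg a e"
proof -
  have "(\<Sum>x\<in>D. ind1 rv e x * a (face x))
      = (\<Sum>x\<in>D. (if x = e then a (face e) else 0) - (if x = rv e then a (face (rv e)) else 0))"
    using rv_neq[OF assms] by (intro sum.cong) (auto simp: ind1_def)
  also have "\<dots> = a (face e) - a (face (rv e))"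
    using assms rv_in_D[OF assms] by (simp add: sum_subtractf finite_D)
  finally show ?thesis
    using assms by (simp add: inner2_dform1 codiff2_apply)
qed

lemma sum_codiff2_vert:
  assumes "w \<in> D"
  shows "(\<Sum>x\<in>vert sg w. codiff2 D rv sg a x) = 0"
proof -
  have sub: "vert sg w \<subseteq> D"
    using vert_subset[OF assms] .
  have "(\<Sum>x\<in>vert sg w. a (face (rv x))) = (\<Sum>x\<in>vert sg w. a (face (rv (sg x))))"
    using sum.reindex_bij_betw[OF bij_sg_vert[OF assms], of "\<lambda>x. a (face (rv x))"] by simp
  also have "\<dots> = (\<Sum>x\<in>vert sg w. a (face x))"
    using sub face_rv_sg by (intro sum.cong) auto
  finally have "(\<Sum>x\<in>vert sg w. a (face x) - a (face (rv x))) = 0"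
    by (simp add: sum_subtractf)
  then show ?thesis
    using sub by (simp add: codiff2_apply subset_iff)
qed

lemma constant_on_faces_if_codiff2_vanishes:
  assumes "\<And>x. x \<in> D \<Longrightarrow> codiff2 D rv sg a x = 0"
  obtains k where "\<And>f. f \<in> faces D rv sg \<Longrightarrow> a f = k"
proof -
  obtain x0 where x0: "x0 \<in> D"
    using D_nonempty by blast
  define h where "h y = a (face y)" for y
  have edge: "h z = h y"
    if "(y, z) \<in> {(e, sg e) | e. e \<in> D} \<union> {(e, rv e) | e. e \<in> D}" for y z
    using that assms[of "sg _"] assms face_rv_sg sg_in_D by (auto simp: h_def codiff2_apply)
  have "h y = h x0" if "y \<in> D" for y
    using connected[OF x0 that]
  proof (induction rule: rtrancl_induct)
    case base
    show ?case by (rule refl)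
  next
    case (step y z)
    then show ?case
      using edge[OF step.hyps(2)] by simp
  qed
  then show thesis
    using that unfolding faces_eq_image h_def by blast
qed

text \<open>The kernel of d* is spanned by mu_*.\<close>
lemma inner2_eq_0_if_codiff2_vanishes:
  assumes "inner2 D rv sg b (mu_star D rv sg) = 0"
    and "\<And>x. x \<in> D \<Longrightarrow> codiff2 D rv sg a x = 0"
  shows "inner2 D rv sg b a = 0"
proof -
  obtain k where "\<And>f. f \<in> faces D rv sg \<Longrightarrow> a f = k"
    using constant_on_faces_if_codiff2_vanishes assms(2) by blast
  then have "inner2 D rv sg b a = k * inner2 D rv sg b (mu_star D rv sg)"
    by (simp add: inner2_def mu_star_def sum_distrib_left mult.commute)
  with assms(1) show ?thesis
    by simp
qed

lemma Omega2_eqI: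
  assumes "n \<in> Omega2 D rv sg" "n' \<in> Omega2 D rv sg"
    and "\<And>x. x \<in> D \<Longrightarrow> codiff2 D rv sg n x = codiff2 D rv sg n' x"
    and "inner2 D rv sg n (mu_star D rv sg) = inner2 D rv sg n' (mu_star D rv sg)"
  shows "n = n'"
proof -
  define d where "d = (\<lambda>f. n f - n' f)"
  have "inner2 D rv sg d (mu_star D rv sg) = 0"
    using assms(4) by (simp add: d_def inner2_def left_diff_distrib sum_subtractf)
  moreover have "codiff2 D rv sg d x = 0" if "x \<in> D" for x
    using assms(3)[OF that] that by (simp add: d_def codiff2_apply)
  ultimately have "inner2 D rv sg d d = 0"
    by (rule inner2_eq_0_if_codiff2_vanishes)
  then have d_zero: "d f = 0" if "f \<in> faces D rv sg" for f
    using inner_on_self_eq_0[OF finite_faces] that by (simp add: inner2_eq_inner_on)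
  show ?thesis
  proof
    fix f
    show "n f = n' f"
      using d_zero[of f] assms(1,2) by (cases "f \<in> faces D rv sg") (auto simp: d_def Omega2_def)
  qed
qed

lemma exists_codiff2_preimage_orthogonal_mu_star:
  assumes "w \<in> codiff2 D rv sg ` Omega2 D rv sg"
  obtains n where "n \<in> Omega2 D rv sg" "codiff2 D rv sg n = w"
    "inner2 D rv sg n (mu_star D rv sg) = 0"
proof -
  let ?mu = "mu_star D rv sg"
  obtain a where a: "a \<in> Omega2 D rv sg" "codiff2 D rv sg a = w"
    using assms by blast
  define s where "s = inner2 D rv sg a ?mu / inner2 D rv sg ?mu ?mu"
  define n where "n = (\<lambda>f. a f - s * ?mu f)"
  have "n \<in> Omega2 D rv sg"
    using a(1) by (simp add: n_def Omega2_def mu_star_def)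
  moreover have "codiff2 D rv sg n = codiff2 D rv sg a"
    by (auto simp: fun_eq_iff codiff2_eq n_def mu_star_def face_in_faces rv_in_D)
  moreover have "inner2 D rv sg ?mu ?mu = real (card (faces D rv sg))"
    by (simp add: inner2_def mu_star_def)
  then have "inner2 D rv sg ?mu ?mu \<noteq> 0"
    using finite_faces D_nonempty by (simp add: faces_eq_image)
  then have "inner2 D rv sg n ?mu = 0"
    unfolding inner2_eq_inner_on n_def inner_on_diff_scale_left s_def by simp
  ultimately show thesis
    using that a(2) by simp
qed

lemma winding_props:
  assumes "hom_trivial D rv sg l"
  shows "winding D rv sg l \<in> Omega2 D rv sg"
    and "codiff2 D rv sg (winding D rv sg l) = omega_path rv l"
    and "inner2 D rv sg (winding D rv sg l) (mu_star D rv sg) = 0"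
proof -
  obtain n where n: "n \<in> Omega2 D rv sg" "codiff2 D rv sg n = omega_path rv l"
    "inner2 D rv sg n (mu_star D rv sg) = 0"
    using exists_codiff2_preimage_orthogonal_mu_star assms unfolding hom_trivial_def by blast
  have "winding D rv sg l = n"
    unfolding winding_def
  proof (rule the_equality)
    fix n'
    assume "n' \<in> Omega2 D rv sg \<and> codiff2 D rv sg n' = omega_path rv l \<and>
        inner2 D rv sg n' (mu_star D rv sg) = 0"
    then show "n' = n"
      using n by (intro Omega2_eqI) simp_all
  qed (use n in blast)
  with n show "winding D rv sg l \<in> Omega2 D rv sg"
    and "codiff2 D rv sg (winding D rv sg l) = omega_path rv l"
    and "inner2 D rv sg (winding D rv sg l) (mu_star D rv sg) = 0"
    by simp_all
qed

end

section \<open>Tame loops\<close>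

locale tame_loop_in = rotation_system D rv sg for D :: "'d set" and rv sg +
  fixes l :: "'d list"
  assumes tame: "tame_loop D rv sg l"
begin

abbreviation nxt :: "nat \<Rightarrow> nat" where
  "nxt i \<equiv> Suc i mod length l"

lemma l_nonempty: "l \<noteq> []"
  using tame unfolding tame_loop_def is_loop_def by blast

lemma set_l_subset: "set l \<subseteq> D"
  using tame unfolding tame_loop_def is_loop_def by blast

lemma nth_in_D: "i < length l \<Longrightarrow> l ! i \<in> D"
  using set_l_subset nth_mem by blast

lemma nxt_less [simp]: "nxt i < length l"
  using l_nonempty by simp

lemma loop_link: "i < length l \<Longrightarrow> vert sg (rv (l ! i)) = vert sg (l ! nxt i)"
  using tame unfolding tame_loop_def is_loop_def by simp

lemma distinct_l: "distinct l"
  using tame unfolding tame_loop_def by blast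

lemma rv_notin: "e \<in> set l \<Longrightarrow> rv e \<notin> set l"
  using tame unfolding tame_loop_def by blast

lemma visits_le_2: "visits sg l v \<le> 2"
  using tame unfolding tame_loop_def by blast

lemma crossing_labels_exist:
  "v \<in> Vl sg l \<Longrightarrow> \<exists>e1 e2 e3 e4. crossing_labels rv sg l v e1 e2 e3 e4"
  using tame unfolding tame_loop_def Vl_def by blast

lemma omega_path_apply:
  assumes "x \<in> D"
  shows "omega_path rv l x = (if x \<in> set l then 1 else if rv x \<in> set l then -1 else 0)"
proof -
  have "omega_path rv l x = (\<Sum>e\<in>set l. ind1 rv e x)"
    unfolding omega_path_def by (rule sum.reindex_bij_betw[OF bij_betw_nth[OF distinct_l refl refl]])
  also have "\<dots> = (\<Sum>e\<in>set l. (if e = x then 1 else 0) - (if e = rv x then 1 else 0))"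
  proof (intro sum.cong refl)
    fix e
    assume "e \<in> set l"
    then have "x = rv e \<longleftrightarrow> e = rv x"
      using assms set_l_subset by auto
    then show "ind1 rv e x = (if e = x then 1 else 0) - (if e = rv x then 1 else 0)"
      using rv_neq[OF assms] by (auto simp: ind1_def)
  qed
  also have "\<dots> = (if x \<in> set l then 1 else 0) - (if rv x \<in> set l then 1 else 0)"
    by (simp add: sum_subtractf)
  finally show ?thesis
    using rv_notin by auto
qed

lemma omega_path_outside:
  assumes "x \<notin> D"
  shows "omega_path rv l x = 0"
proof -
  have "ind1 rv (l ! i) x = 0" if "i < length l" for i
    using assms nth_in_D[OF that] rv_in_D[OF nth_in_D[OF that]] by (auto simp: ind1_def)
  then show ?thesis
    by (simp add: omega_path_def)
qed

lemma hom_trivial_if_codiff2_multiple: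
  assumes "c \<noteq> 0" and "\<And>x. x \<in> D \<Longrightarrow> codiff2 D rv sg r x = c * omega_path rv l x"
  shows "hom_trivial D rv sg l"
proof -
  define n where "n = (\<lambda>f. if f \<in> faces D rv sg then r f / c else 0)"
  have "n \<in> Omega2 D rv sg"
    by (simp add: n_def Omega2_def)
  moreover have "codiff2 D rv sg n = omega_path rv l"
  proof
    fix x
    show "codiff2 D rv sg n x = omega_path rv l x"
      using assms(1) assms(2)[of x] omega_path_outside[of x]
      by (cases "x \<in> D") (auto simp: codiff2_eq n_def face_in_faces rv_in_D field_simps)
  qed
  ultimately show ?thesis
    unfolding hom_trivial_def by (metis image_eqI)
qed

(* i \<in> arrivals W when the i-th dart of l ends at W, i.e. the next one starts there. *)
definition arrivals :: "'d set \<Rightarrow> nat set" where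
  "arrivals W = {i. i < length l \<and> vert sg (l ! nxt i) = W}"

lemma arrivals_less: "i \<in> arrivals W \<Longrightarrow> i < length l"
  by (simp add: arrivals_def)

lemma finite_arrivals: "finite (arrivals W)"
  by (rule finite_subset[of _ "{..<length l}"]) (auto simp: arrivals_def)

lemma bij_betw_nxt: "bij_betw nxt {..<length l} {..<length l}"
proof -
  have "inj_on nxt {..<length l}"
    by (auto intro!: inj_onI simp: mod_Suc split: if_split_asm)
  moreover have "nxt ` {..<length l} \<subseteq> {..<length l}"
    by auto
  ultimately show ?thesis
    using endo_inj_surj[of "{..<length l}" nxt] by (simp add: bij_betw_def)
qed

lemma nxt_surj:
  assumes "m < length l"
  obtains i where "i < length l" "nxt i = m"
proof -
  have "m \<in> nxt ` {..<length l}"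
    using assms bij_betw_nxt by (simp add: bij_betw_def)
  then show thesis
    using that by auto
qed

lemma card_arrivals: "card (arrivals W) = visits sg l W"
proof -
  have "inj_on nxt (arrivals W)"
    using bij_betw_imp_inj_on[OF bij_betw_nxt] inj_on_subset arrivals_less by blast
  moreover have "nxt ` arrivals W = {m. m < length l \<and> vert sg (l ! m) = W}"
  proof (intro equalityI subsetI)
    fix m
    assume "m \<in> nxt ` arrivals W"
    then show "m \<in> {m. m < length l \<and> vert sg (l ! m) = W}"
      by (auto simp: arrivals_def)
  next
    fix m
    assume m: "m \<in> {m. m < length l \<and> vert sg (l ! m) = W}"
    then obtain i where "i < length l" "nxt i = m"
      using nxt_surj by blast
    with m show "m \<in> nxt ` arrivals W"
      by (auto simp: arrivals_def)
  qed
  ultimately show ?thesis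
    unfolding visits_def by (metis card_image)
qed

lemma Vl_vertex:
  assumes "v \<in> Vl sg l"
  obtains m where "m < length l" "v = vert sg (l ! m)"
proof -
  have "card {i. i < length l \<and> vert sg (l ! i) = v} = 2"
    using assms by (simp add: Vl_def visits_def)
  then have "{i. i < length l \<and> vert sg (l ! i) = v} \<noteq> {}"
    by (metis card.empty zero_neq_numeral)
  then show thesis
    using that by blast
qed

lemma finite_Vl: "finite (Vl sg l)"
proof -
  have "Vl sg l \<subseteq> (\<lambda>m. vert sg (l ! m)) ` {..<length l}"
  proof
    fix v
    assume "v \<in> Vl sg l"
    then obtain m where "m < length l" "v = vert sg (l ! m)"
      by (rule Vl_vertex)
    then show "v \<in> (\<lambda>m. vert sg (l ! m)) ` {..<length l}"
      by simp
  qed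
  then show ?thesis
    by (rule finite_subset) simp
qed

lemma loop_darts_leaving:
  assumes "w \<in> D"
  shows "{x \<in> vert sg w. x \<in> set l} = (\<lambda>i. l ! nxt i) ` arrivals (vert sg w)"
proof (intro equalityI subsetI)
  fix x
  assume "x \<in> {x \<in> vert sg w. x \<in> set l}"
  then have x: "x \<in> vert sg w" "x \<in> set l"
    by auto
  obtain m where m: "m < length l" "x = l ! m"
    using x(2) by (auto simp: in_set_conv_nth)
  obtain i where i: "i < length l" "nxt i = m"
    using nxt_surj[OF m(1)] .
  have "vert sg (l ! nxt i) = vert sg w"
    using x(1) assms nth_in_D[OF m(1)] mem_vert_iff i(2) m(2) by simp
  then show "x \<in> (\<lambda>i. l ! nxt i) ` arrivals (vert sg w)"
    using i m by (auto simp: arrivals_def)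
next
  fix x
  assume "x \<in> (\<lambda>i. l ! nxt i) ` arrivals (vert sg w)"
  then obtain i where i: "vert sg (l ! nxt i) = vert sg w" "x = l ! nxt i"
    by (auto simp: arrivals_def)
  then show "x \<in> {x \<in> vert sg w. x \<in> set l}"
    using assms nth_in_D[OF nxt_less] mem_vert_iff by simp
qed

lemma loop_darts_entering:
  assumes "w \<in> D"
  shows "{x \<in> vert sg w. rv x \<in> set l} = (\<lambda>i. rv (l ! i)) ` arrivals (vert sg w)"
proof (intro equalityI subsetI)
  fix x
  assume "x \<in> {x \<in> vert sg w. rv x \<in> set l}"
  then have x: "x \<in> vert sg w" "rv x \<in> set l" "x \<in> D"
    using vert_subset[OF assms] by auto
  obtain i where i: "i < length l" "rv x = l ! i"
    using x(2) by (auto simp: in_set_conv_nth)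
  have "vert sg (l ! nxt i) = vert sg w"
    using loop_link[OF i(1)] i(2) x(1,3) assms mem_vert_iff by (metis rv_rv)
  moreover have "x = rv (l ! i)"
    using i(2) x(3) by (metis rv_rv)
  ultimately show "x \<in> (\<lambda>i. rv (l ! i)) ` arrivals (vert sg w)"
    using i(1) by (intro rev_image_eqI[of i]) (auto simp: arrivals_def)
next
  fix x
  assume "x \<in> (\<lambda>i. rv (l ! i)) ` arrivals (vert sg w)"
  then obtain i where i: "i < length l" "vert sg (l ! nxt i) = vert sg w" "x = rv (l ! i)"
    by (auto simp: arrivals_def)
  then show "x \<in> {x \<in> vert sg w. rv x \<in> set l}"
    using assms nth_in_D[OF i(1)] rv_in_D loop_link[OF i(1)] mem_vert_iff by simp
qed

lemma sum_vert_eq_sum_arrivals: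
  fixes c :: "'d \<Rightarrow> real"
  assumes w: "w \<in> D"
    and off_loop: "\<And>x. x \<in> vert sg w \<Longrightarrow> x \<notin> El rv l \<Longrightarrow> c x = 0"
    and antisym: "\<And>x. x \<in> D \<Longrightarrow> c (rv x) = - c x"
  shows "(\<Sum>x\<in>vert sg w. c x) = (\<Sum>i\<in>arrivals (vert sg w). c (l ! nxt i) - c (l ! i))"
proof -
  let ?A = "arrivals (vert sg w)"
  have fin: "finite (vert sg w)"
    using finite_vert[OF w] .
  have "inj_on nxt ?A"
    using bij_betw_imp_inj_on[OF bij_betw_nxt] inj_on_subset arrivals_less by blast
  then have inj_leaving: "inj_on (\<lambda>i. l ! nxt i) ?A"
    by (auto intro!: inj_onI simp: nth_eq_iff_index_eq[OF distinct_l] dest: inj_onD)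
  have inj_entering: "inj_on (\<lambda>i. rv (l ! i)) ?A"
  proof (rule inj_onI)
    fix i j
    assume ij: "i \<in> ?A" "j \<in> ?A" "rv (l ! i) = rv (l ! j)"
    then have "l ! i = l ! j"
      using nth_in_D arrivals_less by (metis rv_rv)
    then show "i = j"
      using ij arrivals_less nth_eq_iff_index_eq[OF distinct_l] by blast
  qed
  have "(\<Sum>x\<in>vert sg w. c x) = (\<Sum>x\<in>{x \<in> vert sg w. x \<in> set l} \<union> {x \<in> vert sg w. rv x \<in> set l}. c x)"
    using fin off_loop by (intro sum.mono_neutral_right) (auto simp: El_def)
  also have "\<dots> = (\<Sum>x\<in>{x \<in> vert sg w. x \<in> set l}. c x) + (\<Sum>x\<in>{x \<in> vert sg w. rv x \<in> set l}. c x)"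
    using fin rv_notin by (intro sum.union_disjoint) auto
  also have "\<dots> = (\<Sum>i\<in>?A. c (l ! nxt i)) + (\<Sum>i\<in>?A. c (rv (l ! i)))"
    unfolding loop_darts_leaving[OF w] loop_darts_entering[OF w]
    using inj_leaving inj_entering by (simp add: sum.reindex)
  also have "(\<Sum>i\<in>?A. c (rv (l ! i))) = (\<Sum>i\<in>?A. - c (l ! i))"
    using antisym nth_in_D arrivals_less by (intro sum.cong) auto
  also have "(\<Sum>i\<in>?A. c (l ! nxt i)) + (\<Sum>i\<in>?A. - c (l ! i)) = (\<Sum>i\<in>?A. c (l ! nxt i) - c (l ! i))"
    by (simp add: sum_subtractf sum_negf)
  finally show ?thesis .
qed

lemma mm_vec_labels:
  assumes "v \<in> Vl sg l"
  obtains e1 e2 e3 e4 where "crossing_labels rv sg l v e1 e2 e3 e4"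
    "mm_vec D rv sg l v = (\<lambda>f. dform1 D rv sg (ind1 rv e1) f + dform1 D rv sg (ind1 rv e3) f)"
proof -
  let ?P = "\<lambda>t. case t of (e1, e2, e3, e4) \<Rightarrow> crossing_labels rv sg l v e1 e2 e3 e4"
  obtain e1 e2 e3 e4 where "crossing_labels rv sg l v e1 e2 e3 e4"
    using crossing_labels_exist[OF assms] by blast
  then have "?P (e1, e2, e3, e4)"
    by simp
  then have "?P (SOME t. ?P t)"
    by (rule someI)
  then show thesis
    using that unfolding mm_vec_def by (auto split: prod.splits)
qed

lemma crossing_arrivals:
  assumes v: "v \<in> Vl sg l" and labels: "crossing_labels rv sg l v e1 e2 e3 e4"
  obtains i j where "arrivals v = {i, j}" "i \<noteq> j" "l ! i = rv e1" "l ! nxt i = e3" "e1 \<in> D"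
proof -
  obtain m where m: "m < length l" "v = vert sg (l ! m)"
    using Vl_vertex[OF v] .
  have v_vertex: "vert sg x = v" if "x \<in> v" for x
    using that m mem_vert_iff nth_in_D vert_subset by blast
  have e1: "e1 \<in> v" "vert sg e1 = v" and ccw: "ccw4 sg e1 e2 e3 e4"
    using labels self_in_vert unfolding crossing_labels_def by metis+
  obtain i j where ij: "i < length l" "j < length l" "l ! i = rv e1" "l ! nxt i = e3"
    "l ! j = rv e2"
    using labels unfolding crossing_labels_def by auto
  have e2: "e2 \<in> v" "e2 \<noteq> e1"
    using ccw4_second[OF ccw] e1(2) by simp_all
  have D: "e1 \<in> D" "e2 \<in> D"
    using e1(1) e2(1) m vert_subset nth_in_D by blast+
  have "vert sg (l ! nxt i) = v"
    using loop_link[OF ij(1)] ij(3) D(1) e1(2) by simp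
  moreover have "vert sg (l ! nxt j) = v"
    using loop_link[OF ij(2)] ij(5) D(2) v_vertex[OF e2(1)] by simp
  ultimately have arr: "i \<in> arrivals v" "j \<in> arrivals v"
    using ij(1,2) by (simp_all add: arrivals_def)
  have "i \<noteq> j"
    using ij(3,5) D e2(2) by (metis rv_rv)
  moreover have "arrivals v = {i, j}"
  proof (rule card_subset_eq[symmetric])
    show "finite (arrivals v)"
      by (rule finite_arrivals)
    show "{i, j} \<subseteq> arrivals v"
      using arr by blast
    show "card {i, j} = card (arrivals v)"
      using \<open>i \<noteq> j\<close> v by (simp add: card_arrivals Vl_def)
  qed
  ultimately show thesis
    using that ij(3,4) D(1) by blast
qed

lemma mm_vec_transit:
  assumes "v \<in> Vl sg l"
  obtains i j where "arrivals v = {i, j}" "i \<noteq> j"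
    "\<And>a. inner2 D rv sg (mm_vec D rv sg l v) a
      = codiff2 D rv sg a (l ! nxt i) - codiff2 D rv sg a (l ! i)"
proof -
  obtain e1 e2 e3 e4 where labels: "crossing_labels rv sg l v e1 e2 e3 e4"
    and mm: "mm_vec D rv sg l v = (\<lambda>f. dform1 D rv sg (ind1 rv e1) f + dform1 D rv sg (ind1 rv e3) f)"
    using mm_vec_labels[OF assms] .
  obtain i j where ij: "arrivals v = {i, j}" "i \<noteq> j" "l ! i = rv e1" "l ! nxt i = e3" "e1 \<in> D"
    using crossing_arrivals[OF assms labels] .
  have "e3 \<in> D"
    using ij(4) nth_in_D[OF nxt_less[of i]] by simp
  then have "inner2 D rv sg (mm_vec D rv sg l v) a
      = codiff2 D rv sg a (l ! nxt i) - codiff2 D rv sg a (l ! i)" for a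
    using ij(3-5) by (simp add: mm inner2_add_left inner2_dform1_ind1 codiff2_rv)
  with ij(1,2) show thesis
    using that by blast
qed

abbreviation mm_generators :: "('d set \<Rightarrow> real) set" where
  "mm_generators \<equiv>
    mm_vec D rv sg l ` Vl sg l \<union> (\<lambda>e. dform1 D rv sg (ind1 rv e)) ` (D - El rv l)"

lemma finite_mm_generators: "finite mm_generators"
  using finite_Vl finite_D by blast

lemma mm_generators_in_Omega2: "g \<in> mm_generators \<Longrightarrow> g \<in> Omega2 D rv sg"
  by (auto simp: Omega2_def mm_vec_def dform1_def split: prod.splits)

lemma codiff2_vanishes_off_loop:
  assumes "\<And>g. g \<in> mm_generators \<Longrightarrow> inner2 D rv sg g r = 0" "x \<in> D" "x \<notin> El rv l"
  shows "codiff2 D rv sg r x = 0"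
  using assms(1)[of "dform1 D rv sg (ind1 rv x)"] assms(2,3) by (simp add: inner2_dform1_ind1)

lemma sum_jumps_arrivals_eq_0:
  assumes r: "\<And>g. g \<in> mm_generators \<Longrightarrow> inner2 D rv sg g r = 0" and w: "w \<in> D"
  shows "(\<Sum>k\<in>arrivals (vert sg w). codiff2 D rv sg r (l ! nxt k) - codiff2 D rv sg r (l ! k)) = 0"
proof -
  have "(\<Sum>k\<in>arrivals (vert sg w). codiff2 D rv sg r (l ! nxt k) - codiff2 D rv sg r (l ! k))
      = (\<Sum>x\<in>vert sg w. codiff2 D rv sg r x)"
    using vert_subset[OF w] codiff2_vanishes_off_loop[OF r] codiff2_rv
    by (intro sum_vert_eq_sum_arrivals[OF w, symmetric]) auto
  also have "\<dots> = 0"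
    using sum_codiff2_vert[OF w] .
  finally show ?thesis .
qed

lemma codiff2_continues_along_loop:
  assumes r: "\<And>g. g \<in> mm_generators \<Longrightarrow> inner2 D rv sg g r = 0" and i: "i < length l"
  shows "codiff2 D rv sg r (l ! nxt i) = codiff2 D rv sg r (l ! i)"
proof -
  define jump where "jump k = codiff2 D rv sg r (l ! nxt k) - codiff2 D rv sg r (l ! k)" for k
  define W where "W = vert sg (l ! nxt i)"
  have sum_jumps: "(\<Sum>k\<in>arrivals W. jump k) = 0"
    unfolding W_def jump_def using sum_jumps_arrivals_eq_0[OF r nth_in_D[OF nxt_less]] .
  have i_arr: "i \<in> arrivals W"
    using i by (simp add: arrivals_def W_def)
  then have "1 \<le> visits sg l W"
    using finite_arrivals card_arrivals by (metis One_nat_def Suc_leI card_gt_0_iff empty_iff)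
  with visits_le_2[of W] consider "visits sg l W = 1" | "visits sg l W = 2"
    by linarith
  then show ?thesis
  proof cases
    case 1
    then have "arrivals W = {i}"
      using i_arr card_arrivals by (metis card_1_singletonE singletonD)
    then show ?thesis
      using sum_jumps by (simp add: jump_def)
  next
    case 2
    then have W: "W \<in> Vl sg l"
      by (simp add: Vl_def)
    obtain i0 j0 where arr: "arrivals W = {i0, j0}" "i0 \<noteq> j0"
      and mm: "\<And>a. inner2 D rv sg (mm_vec D rv sg l W) a
        = codiff2 D rv sg a (l ! nxt i0) - codiff2 D rv sg a (l ! i0)"
      by (rule mm_vec_transit[OF W]) blast
    have "jump i0 = 0"
      using r[of "mm_vec D rv sg l W"] W mm by (simp add: jump_def)
    moreover have "jump i0 + jump j0 = 0"
      using sum_jumps arr by simp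
    ultimately show ?thesis
      using i_arr arr by (auto simp: jump_def)
  qed
qed

lemma codiff2_constant_along_loop:
  assumes r: "\<And>g. g \<in> mm_generators \<Longrightarrow> inner2 D rv sg g r = 0" and k: "k < length l"
  shows "codiff2 D rv sg r (l ! k) = codiff2 D rv sg r (l ! 0)"
  using k
proof (induction k)
  case 0
  show ?case by (rule refl)
next
  case (Suc k)
  then have "codiff2 D rv sg r (l ! nxt k) = codiff2 D rv sg r (l ! k)"
    using codiff2_continues_along_loop[OF r, of k] by simp
  with Suc show ?case
    by simp
qed

lemma codiff2_proportional_omega_path:
  assumes r: "\<And>g. g \<in> mm_generators \<Longrightarrow> inner2 D rv sg g r = 0"
  shows "\<exists>c. \<forall>x\<in>D. codiff2 D rv sg r x = c * omega_path rv l x"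
proof -
  let ?c = "codiff2 D rv sg r (l ! 0)"
  have "codiff2 D rv sg r x = ?c * omega_path rv l x" if x: "x \<in> D" for x
  proof -
    consider "x \<in> set l" | "rv x \<in> set l" | "x \<notin> El rv l"
      by (auto simp: El_def)
    then show ?thesis
    proof cases
      case 1
      then show ?thesis
        using codiff2_constant_along_loop[OF r] x by (auto simp: omega_path_apply in_set_conv_nth)
    next
      case 2
      then obtain k where "k < length l" "l ! k = rv x"
        by (auto simp: in_set_conv_nth)
      then have "codiff2 D rv sg r (rv x) = ?c"
        using codiff2_constant_along_loop[OF r] by metis
      then show ?thesis
        using 2 x rv_notin codiff2_rv[OF x] by (auto simp: omega_path_apply)
    next
      case 3
      then show ?thesis
        using codiff2_vanishes_off_loop[OF r x] x by (simp add: omega_path_apply El_def)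
    qed
  qed
  then show ?thesis
    by blast
qed

lemma inner2_mm_generator_eq_0:
  assumes "g \<in> mm_generators" and b: "\<And>x. x \<in> D \<Longrightarrow> codiff2 D rv sg b x = s * omega_path rv l x"
  shows "inner2 D rv sg g b = 0"
  using assms(1)
proof
  assume "g \<in> mm_vec D rv sg l ` Vl sg l"
  then obtain v where v: "v \<in> Vl sg l" "g = mm_vec D rv sg l v"
    by blast
  obtain i j where "arrivals v = {i, j}"
    and mm: "\<And>a. inner2 D rv sg (mm_vec D rv sg l v) a
      = codiff2 D rv sg a (l ! nxt i) - codiff2 D rv sg a (l ! i)"
    by (rule mm_vec_transit[OF v(1)]) blast
  then have "i < length l"
    using arrivals_less by blast
  then show ?thesis
    using mm[of b] b nth_in_D v(2) by (simp add: omega_path_apply)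
next
  assume "g \<in> (\<lambda>e. dform1 D rv sg (ind1 rv e)) ` (D - El rv l)"
  then obtain e where e: "e \<in> D" "e \<notin> set l" "rv e \<notin> set l" "g = dform1 D rv sg (ind1 rv e)"
    by (auto simp: El_def)
  then show ?thesis
    using b[OF e(1)] by (simp add: inner2_dform1_ind1 omega_path_apply)
qed

lemma mm_space_eq_lincomb:
  "a \<in> mm_space D rv sg l \<longleftrightarrow> (\<exists>c. a = (\<lambda>f. \<Sum>g\<in>mm_generators. c g * g f))"
  unfolding mm_space_def using lin_span_finite[OF finite_mm_generators] .

lemma mm_space_subset_Omega2: "mm_space D rv sg l \<subseteq> Omega2 D rv sg"
proof
  fix a
  assume "a \<in> mm_space D rv sg l"
  then obtain c where a: "a = (\<lambda>f. \<Sum>g\<in>mm_generators. c g * g f)"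
    by (auto simp: mm_space_eq_lincomb)
  have "g f = 0" if "g \<in> mm_generators" "f \<notin> faces D rv sg" for g f
    using mm_generators_in_Omega2[OF that(1)] that(2) by (simp add: Omega2_def)
  then show "a \<in> Omega2 D rv sg"
    unfolding Omega2_def a by (simp add: sum.neutral)
qed

lemma inner2_mm_space_eq_0:
  assumes "a \<in> mm_space D rv sg l"
    and "\<And>x. x \<in> D \<Longrightarrow> codiff2 D rv sg b x = s * omega_path rv l x"
  shows "inner2 D rv sg a b = 0"
proof -
  obtain c where a: "a = (\<lambda>f. \<Sum>g\<in>mm_generators. c g * g f)"
    using assms(1) by (auto simp: mm_space_eq_lincomb)
  have "inner2 D rv sg a b = (\<Sum>g\<in>mm_generators. c g * inner2 D rv sg g b)"
    by (simp add: a inner2_eq_inner_on inner_on_lincomb_left)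
  also have "\<dots> = 0"
    using inner2_mm_generator_eq_0[OF _ assms(2)] by simp
  finally show ?thesis .
qed

lemma inner2_eq_0_if_orthogonal_mm_generators:
  assumes mu: "inner2 D rv sg a (mu_star D rv sg) = 0"
    and n: "hom_trivial D rv sg l \<Longrightarrow> inner2 D rv sg a (winding D rv sg l) = 0"
    and r: "\<And>g. g \<in> mm_generators \<Longrightarrow> inner2 D rv sg g r = 0"
  shows "inner2 D rv sg a r = 0"
proof -
  obtain c where c: "\<forall>x\<in>D. codiff2 D rv sg r x = c * omega_path rv l x"
    using codiff2_proportional_omega_path[OF r] by blast
  show ?thesis
  proof (cases "hom_trivial D rv sg l")
    case True
    let ?n = "winding D rv sg l"
    have "inner2 D rv sg a (\<lambda>f. r f - c * ?n f) = 0"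
    proof (rule inner2_eq_0_if_codiff2_vanishes[OF mu])
      fix x
      assume "x \<in> D"
      then show "codiff2 D rv sg (\<lambda>f. r f - c * ?n f) x = 0"
        using c winding_props(2)[OF True] by (simp add: codiff2_diff_scale)
    qed
    moreover have "inner2 D rv sg a (\<lambda>f. r f - c * ?n f)
        = inner2 D rv sg a r - c * inner2 D rv sg a ?n"
      by (simp add: inner2_def right_diff_distrib sum_subtractf sum_distrib_left mult.left_commute)
    ultimately show ?thesis
      using n[OF True] by simp
  next
    case False
    have "c = 0"
    proof (rule ccontr)
      assume "c \<noteq> 0"
      then have "hom_trivial D rv sg l"
        using c by (intro hom_trivial_if_codiff2_multiple[of c r]) simp_all
      with False show False
        by simp
    qed
    then show ?thesis
      using c by (intro inner2_eq_0_if_codiff2_vanishes[OF mu]) simp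
  qed
qed

lemma mem_mm_space_if_orthogonal:
  assumes "a \<in> Omega2 D rv sg" "inner2 D rv sg a (mu_star D rv sg) = 0"
    and "hom_trivial D rv sg l \<Longrightarrow> inner2 D rv sg a (winding D rv sg l) = 0"
  shows "a \<in> mm_space D rv sg l"
proof -
  have orth: "inner_on (faces D rv sg) a r = 0"
    if r: "\<And>g. g \<in> mm_generators \<Longrightarrow> inner_on (faces D rv sg) g r = 0" for r
  proof -
    have "inner2 D rv sg a r = 0"
    proof (rule inner2_eq_0_if_orthogonal_mm_generators[OF assms(2,3)])
      fix g
      assume "g \<in> mm_generators"
      from r[OF this] show "inner2 D rv sg g r = 0"
        by (simp add: inner2_eq_inner_on)
    qed
    then show ?thesis
      by (simp add: inner2_eq_inner_on)
  qed
  obtain c where c: "\<forall>f\<in>faces D rv sg. a f = (\<Sum>g\<in>mm_generators. c g * g f)"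
    using in_span_on_if_orthogonal[OF finite_faces finite_mm_generators orth] by blast
  have "g f = 0" if "g \<in> mm_generators" "f \<notin> faces D rv sg" for g f
    using mm_generators_in_Omega2[OF that(1)] that(2) by (simp add: Omega2_def)
  then have "a f = (\<Sum>g\<in>mm_generators. c g * g f)" for f
    using c assms(1) by (cases "f \<in> faces D rv sg") (simp_all add: Omega2_def sum.neutral)
  then have "a = (\<lambda>f. \<Sum>g\<in>mm_generators. c g * g f)"
    by (rule ext)
  then show ?thesis
    unfolding mm_space_eq_lincomb by blast
qed

end

theorem lemma2p14:
  fixes D :: "'d set" and rv sg :: "'d \<Rightarrow> 'd" and l :: "'d list"
  assumes "comb_map D rv sg"
    and "tame_loop D rv sg l"
  shows "mm_space D rv sg l =
    (if \<not> hom_trivial D rv sg l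
     then {a \<in> Omega2 D rv sg. inner2 D rv sg a (mu_star D rv sg) = 0}
     else {a \<in> Omega2 D rv sg. inner2 D rv sg a (mu_star D rv sg) = 0 \<and>
                               inner2 D rv sg a (winding D rv sg l) = 0})"
proof -
  interpret tame_loop_in D rv sg l
    using assms by (intro tame_loop_in.intro rotation_system.intro tame_loop_in_axioms.intro)
  have mu: "codiff2 D rv sg (mu_star D rv sg) x = 0 * omega_path rv l x" if "x \<in> D" for x
    using codiff2_mu_star[OF that] by simp
  have n: "codiff2 D rv sg (winding D rv sg l) x = 1 * omega_path rv l x"
    if "hom_trivial D rv sg l" for x
    using winding_props(2)[OF that] by simp
  show ?thesis
    using mm_space_subset_Omega2 inner2_mm_space_eq_0[OF _ mu] inner2_mm_space_eq_0[OF _ n]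
      mem_mm_space_if_orthogonal
    by auto
qed

end
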